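(* Let $(S,\mathcal{S})$ be a measurable space and let $\mathcal{E}\subseteq\mathcal{P}(S)$ be a $\cap$-stable collection with $\sigma(\mathcal{E})=\mathcal{S}$, $\emptyset\in\mathcal{E}$ and $\mathcal{E}\subseteq (\mathcal{E}_{int})_{\sigma}$. If $\pi$ is a constructive cr-set, then \[ T_{\pi}(A)=\sup\{ T_{\pi}(F)\mid F\in\mathcal{E}_{int},\,F\subseteq A\}\quad\text{for all } A\in\mathcal{S}.\]
   Context: $(\Omega,\mathcal{F},P)$ is a probability space; $C(S)$ is the set of countable subsets of $S$; $N_A(M)=|A\cap M|$; $\mathcal{C}(\mathcal{S})=\sigma(N_A\mid A\in\mathcal{S})$; a cr-set is an $\mathcal{F}$-$\mathcal{C}(\mathcal{S})$ measurable map $\pi:\Omega\to C(S)$, finite if its values are finite; a map $\tau:\Omega\to C(S)$ is constructive if $\tau(\omega)=\bigcup_k\pi_k(\omega)$ for all $\omega$ for some finite cr-sets $\pi_k$, $k\in\mathbb{N}$. The hitting function is $T_\pi(A)=P(\pi\cap A\neq\emptyset)$, $A\in\mathcal{S}$. For a nonempty family $\mathcal{E}$: $\mathcal{E}_\sigma$ is the family of countable unions of $\mathcal{E}$-sets (empty union not included); $\mathcal{E}_{int}=\{\bigcap_n (S\setminus E_n)\mid E_n\in\mathcal{E}\}$. *)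

theory Defs
  imports "HOL-Probability.Probability"
begin

definition countable_subsets :: "'a set \<Rightarrow> 'a set set" where
  "countable_subsets S = {X. X \<subseteq> S \<and> countable X}"

definition count_in :: "'a set \<Rightarrow> 'a set \<Rightarrow> enat" where
  "count_in A X = (if finite (A \<inter> X) then enat (card (A \<inter> X)) else \<infinity>)"

text \<open>The measurable space (C(S), C(\<S>)) with C(\<S>) = sigma(N_A | A in \<S>).\<close>
definition C_sigma :: "'a measure \<Rightarrow> 'a set measure" where
  "C_sigma M = sigma (countable_subsets (space M))
     {{X \<in> countable_subsets (space M). count_in A X \<in> B} | A B. A \<in> sets M}"

definition cr_set :: "'w measure \<Rightarrow> 'a measure \<Rightarrow> ('w \<Rightarrow> 'a set) \<Rightarrow> bool" where
  "cr_set P M \<pi> \<longleftrightarrow> \<pi> \<in> measurable P (C_sigma M)"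

definition finite_cr_set :: "'w measure \<Rightarrow> 'a measure \<Rightarrow> ('w \<Rightarrow> 'a set) \<Rightarrow> bool" where
  "finite_cr_set P M \<pi> \<longleftrightarrow> cr_set P M \<pi> \<and> (\<forall>\<omega>\<in>space P. finite (\<pi> \<omega>))"

definition constructive :: "'w measure \<Rightarrow> 'a measure \<Rightarrow> ('w \<Rightarrow> 'a set) \<Rightarrow> bool" where
  "constructive P M \<tau> \<longleftrightarrow>
     (\<forall>\<omega>\<in>space P. \<tau> \<omega> \<in> countable_subsets (space M)) \<and>
     (\<exists>\<pi>s :: nat \<Rightarrow> 'w \<Rightarrow> 'a set. (\<forall>k. finite_cr_set P M (\<pi>s k)) \<and>
        (\<forall>\<omega>\<in>space P. \<tau> \<omega> = (\<Union>k. \<pi>s k \<omega>)))"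

definition hitting :: "'w measure \<Rightarrow> ('w \<Rightarrow> 'a set) \<Rightarrow> 'a set \<Rightarrow> real" where
  "hitting P \<pi> A = measure P {\<omega> \<in> space P. \<pi> \<omega> \<inter> A \<noteq> {}}"

definition sigma_family :: "'a set set \<Rightarrow> 'a set set" where
  "sigma_family E = {\<Union>n. G n | G :: nat \<Rightarrow> 'a set. \<forall>n. G n \<in> E}"

definition int_family :: "'a set \<Rightarrow> 'a set set \<Rightarrow> 'a set set" where
  "int_family S E = {\<Inter>n. S - G n | G :: nat \<Rightarrow> 'a set. \<forall>n. G n \<in> E}"

end

theory Submission
  imports Defs
begin

(*
  Call a set function c on the measurable sets of (S, \<S>) a continuous capacity if it is
  nonnegative, monotone, (countably) subadditive and continuous from above at the empty
  set.  For such c and a generator E as in the theorem, a good-sets argument shows that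
  every A \<in> \<sigma>(E) is inner regular: for each e > 0 there is F \<in> E_int with F \<subseteq> A and
  c(A - F) < e.  The good sets contain E (as E \<subseteq> (E_int)_\<sigma> and E_int is closed under
  finite unions) and are closed under complements and countable unions (using that
  E_int is closed under countable intersections and finite unions).

  The hitting function of a FINITE cr-set is such a capacity: continuity at \<emptyset> holds
  because a finite set eventually misses every decreasing sequence with empty
  intersection.  A constructive \<pi> is the increasing union of the finite cr-sets
  \<pi>_0 \<union> ... \<union> \<pi>_N, whose hitting functions converge to T_\<pi>; combining this with the
  inner regularity of each approximant yields T_\<pi>(A) = sup {T_\<pi>(F) | F \<in> E_int, F \<subseteq> A}.
*)

section \<open>Closure properties of \<open>E_int\<close>\<close>

lemma int_familyE:
  assumes "F \<in> int_family S E"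
  obtains G :: "nat \<Rightarrow> 'a set" where "\<And>n. G n \<in> E" "F = (\<Inter>n. S - G n)"
  using assms unfolding int_family_def by blast

lemma int_familyI: "(\<And>n::nat. G n \<in> E) \<Longrightarrow> F = (\<Inter>n. S - G n) \<Longrightarrow> F \<in> int_family S E"
  unfolding int_family_def by blast

lemma int_family_compl: "G \<in> E \<Longrightarrow> S - G \<in> int_family S E"
  by (rule int_familyI[of "\<lambda>_. G"]) auto

lemma int_family_space: "{} \<in> E \<Longrightarrow> S \<in> int_family S E"
  using int_family_compl[of "{}" E S] by simp

text \<open>The empty set is in \<open>E_int\<close> because \<open>\<emptyset> \<in> E\<close> is a countable union of \<open>E_int\<close>-sets.\<close>
lemma int_family_empty:
  assumes "{} \<in> E" "E \<subseteq> sigma_family (int_family S E)"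
  shows "{} \<in> int_family S E"
proof -
  obtain G :: "nat \<Rightarrow> 'a set" where G: "\<And>n. G n \<in> int_family S E" "{} = (\<Union>n. G n)"
    using assms unfolding sigma_family_def by blast
  from G(2) have "G 0 = {}" by auto
  with G(1) show ?thesis by metis
qed

lemma int_family_sets:
  assumes "E \<subseteq> sets M" "F \<in> int_family (space M) E"
  shows "F \<in> sets M"
proof -
  obtain G :: "nat \<Rightarrow> 'a set" where G: "\<And>n. G n \<in> E" "F = (\<Inter>n. space M - G n)"
    using int_familyE[OF assms(2)] by blast
  have "F = space M - (\<Union>n. G n)" using G(2) by auto
  moreover have "(\<Union>n. G n) \<in> sets M" using G(1) assms(1) by blast
  ultimately show ?thesis by auto
qed

lemma int_family_INT:
  assumes "\<And>i::nat. F i \<in> int_family S E"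
  shows "(\<Inter>i. F i) \<in> int_family S E"
proof -
  have "\<forall>i. \<exists>G::nat \<Rightarrow> _. (\<forall>n. G n \<in> E) \<and> F i = (\<Inter>n. S - G n)"
    using assms unfolding int_family_def by blast
  then obtain G :: "nat \<Rightarrow> nat \<Rightarrow> _" where G: "\<And>i n. G i n \<in> E" "\<And>i. F i = (\<Inter>n. S - G i n)"
    by metis
  define H where "H k = (case prod_decode k of (i, n) \<Rightarrow> G i n)" for k
  have "\<And>k. H k \<in> E" unfolding H_def using G(1) by (simp split: prod.split)
  moreover have "(\<Inter>i. F i) = (\<Inter>k. S - H k)"
  proof
    show "(\<Inter>i. F i) \<subseteq> (\<Inter>k. S - H k)"
      unfolding H_def G(2) by (auto split: prod.split)
    show "(\<Inter>k. S - H k) \<subseteq> (\<Inter>i. F i)"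
    proof
      fix x assume x: "x \<in> (\<Inter>k. S - H k)"
      have "x \<in> S - G i n" for i n
      proof -
        have "x \<in> S - H (prod_encode (i, n))" using x by blast
        then show ?thesis by (simp add: H_def)
      qed
      then show "x \<in> (\<Inter>i. F i)" unfolding G(2) by blast
    qed
  qed
  ultimately show ?thesis by (rule int_familyI)
qed

text \<open>Since \<open>E\<close> is \<open>\<inter>\<close>-stable, \<open>E_int\<close> is closed under binary and finite unions:
  \<open>(\<Inter>i. S - G i) \<union> (\<Inter>n. S - K n) = (\<Inter>i n. S - (G i \<inter> K n))\<close>.\<close>
lemma int_family_Un:
  assumes Eint: "\<And>A B. A \<in> E \<Longrightarrow> B \<in> E \<Longrightarrow> A \<inter> B \<in> E"
    and "F1 \<in> int_family S E" "F2 \<in> int_family S E"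
  shows "F1 \<union> F2 \<in> int_family S E"
proof -
  obtain G :: "nat \<Rightarrow> 'a set" where G: "\<And>n. G n \<in> E" "F1 = (\<Inter>n. S - G n)"
    using int_familyE[OF assms(2)] by blast
  obtain K :: "nat \<Rightarrow> 'a set" where K: "\<And>n. K n \<in> E" "F2 = (\<Inter>n. S - K n)"
    using int_familyE[OF assms(3)] by blast
  define H where "H k = (case prod_decode k of (i, n) \<Rightarrow> G i \<inter> K n)" for k
  have "\<And>k. H k \<in> E" unfolding H_def using G(1) K(1) Eint by (simp split: prod.split)
  moreover have "F1 \<union> F2 = (\<Inter>k. S - H k)"
  proof
    show "F1 \<union> F2 \<subseteq> (\<Inter>k. S - H k)"
      unfolding H_def G(2) K(2) by (auto split: prod.split)
    show "(\<Inter>k. S - H k) \<subseteq> F1 \<union> F2"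
    proof
      fix x assume x: "x \<in> (\<Inter>k. S - H k)"
      have GK: "x \<in> S - (G i \<inter> K n)" for i n
      proof -
        have "x \<in> S - H (prod_encode (i, n))" using x by blast
        then show ?thesis by (simp add: H_def)
      qed
      show "x \<in> F1 \<union> F2"
      proof (cases "x \<in> F1")
        case False
        then obtain i where "x \<in> G i" using GK unfolding G(2) by blast
        then show ?thesis using GK unfolding K(2) by blast
      qed simp
    qed
  qed
  ultimately show ?thesis by (rule int_familyI)
qed

lemma int_family_UN_atMost:
  assumes "\<And>A B. A \<in> E \<Longrightarrow> B \<in> E \<Longrightarrow> A \<inter> B \<in> E"
    and "\<And>i. i \<le> N \<Longrightarrow> F i \<in> int_family S E"
  shows "(\<Union>i\<le>(N::nat). F i) \<in> int_family S E"
  using assms(2)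
proof (induction N)
  case (Suc N)
  have "(\<Union>i\<le>Suc N. F i) = (\<Union>i\<le>N. F i) \<union> F (Suc N)"
    by (auto simp: atMost_Suc)
  then show ?case using Suc int_family_Un[OF assms(1)] by simp
qed simp

section \<open>Inner regularity for continuous capacities\<close>

locale cont_capacity =
  fixes M :: "'a measure" and c :: "'a set \<Rightarrow> real"
  assumes nonneg: "\<And>X. c X \<ge> 0"
    and mono: "\<And>X Y. X \<in> sets M \<Longrightarrow> Y \<in> sets M \<Longrightarrow> X \<subseteq> Y \<Longrightarrow> c X \<le> c Y"
    and subadd: "\<And>X Y. X \<in> sets M \<Longrightarrow> Y \<in> sets M \<Longrightarrow> c (X \<union> Y) \<le> c X + c Y"
    and subadd_countable: "\<And>X. range X \<subseteq> sets M \<Longrightarrow> summable (\<lambda>i. c (X i)) \<Longrightarrow>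
                             c (\<Union>i. X i) \<le> (\<Sum>i. c (X i))"
    and cont_empty: "\<And>D. range D \<subseteq> sets M \<Longrightarrow> decseq D \<Longrightarrow> (\<Inter>i. D i) = {} \<Longrightarrow>
                       (\<lambda>i. c (D i)) \<longlonglongrightarrow> 0"
begin

lemma empty_zero: "c {} = 0"
  using cont_empty[of "\<lambda>_. {}"] by (simp add: decseq_def LIMSEQ_const_iff)

lemma subadd_bound:
  assumes "\<And>i. X i \<in> sets M" "\<And>i. c (X i) \<le> d i" "summable d"
  shows "c (\<Union>i. X i) \<le> suminf d"
proof -
  have s: "summable (\<lambda>i. c (X i))"
    by (rule summable_comparison_test[OF _ assms(3)]) (use assms(2) nonneg in auto)
  have "c (\<Union>i. X i) \<le> (\<Sum>i. c (X i))" using assms(1) s by (intro subadd_countable) auto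
  also have "\<dots> \<le> suminf d" by (rule suminf_le[OF assms(2) s assms(3)])
  finally show ?thesis .
qed

lemma eventually_small:
  assumes "range D \<subseteq> sets M" "decseq D" "(\<Inter>i. D i) = {}" "e > 0"
  obtains N where "c (D N) < e"
  using order_tendstoD(2)[OF cont_empty[OF assms(1-3)] assms(4)]
  by (auto simp: eventually_sequentially)

end

locale capacity_generator = cont_capacity M c for M :: "'a measure" and c +
  fixes E :: "'a set set"
  assumes E_sets: "E \<subseteq> sets M"
    and E_Int: "\<And>A B. A \<in> E \<Longrightarrow> B \<in> E \<Longrightarrow> A \<inter> B \<in> E"
    and E_empty: "{} \<in> E"
    and E_sigma: "E \<subseteq> sigma_family (int_family (space M) E)"
begin

definition inner_regular :: "'a set \<Rightarrow> bool" where
  "inner_regular A \<longleftrightarrow> (\<forall>e>0. \<exists>F\<in>int_family (space M) E. F \<subseteq> A \<and> c (A - F) < e)"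

lemma inner_regularI:
  "(\<And>e. e > 0 \<Longrightarrow> \<exists>F\<in>int_family (space M) E. F \<subseteq> A \<and> c (A - F) < e) \<Longrightarrow> inner_regular A"
  unfolding inner_regular_def by blast

lemma sigma_sets_E_sets: "sigma_sets (space M) E \<subseteq> sets M"
  using E_sets by (rule sets.sigma_sets_subset)

lemma int_family_in_sets: "F \<in> int_family (space M) E \<Longrightarrow> F \<in> sets M"
  using int_family_sets[OF E_sets] .

lemma inner_regular_int_family: "F \<in> int_family (space M) E \<Longrightarrow> inner_regular F"
  by (intro inner_regularI bexI[of _ F]) (auto simp: empty_zero)

text \<open>A countable union \<open>\<Union>n. F n\<close> of \<open>E_int\<close>-sets is approximated by the finite unions
  \<open>\<Union>i\<le>N. F i\<close>, by continuity of \<open>c\<close> at \<open>\<emptyset>\<close>.\<close>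
lemma inner_regular_sigma_family:
  assumes "A \<in> sigma_family (int_family (space M) E)"
  shows "inner_regular A"
proof (rule inner_regularI)
  fix e :: real assume e: "e > 0"
  obtain F :: "nat \<Rightarrow> 'a set" where F: "\<And>n. F n \<in> int_family (space M) E" "A = (\<Union>n. F n)"
    using assms unfolding sigma_family_def by blast
  define D where "D N = A - (\<Union>i\<le>N. F i)" for N
  have "range D \<subseteq> sets M" unfolding D_def F(2) using F(1) int_family_in_sets by auto
  moreover have "decseq D" unfolding decseq_def D_def by auto
  moreover have "(\<Inter>N. D N) = {}" unfolding D_def F(2) by (auto intro: atMost_iff[THEN iffD2, OF order_refl])
  ultimately obtain N where "c (D N) < e" using e by (rule eventually_small)
  moreover have "(\<Union>i\<le>N. F i) \<in> int_family (space M) E"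
    using F(1) by (intro int_family_UN_atMost[OF E_Int])
  moreover have "(\<Union>i\<le>N. F i) \<subseteq> A" unfolding F(2) by blast
  ultimately show "\<exists>F\<in>int_family (space M) E. F \<subseteq> A \<and> c (A - F) < e"
    unfolding D_def by blast
qed

text \<open>The \<open>e/2^i\<close>-argument: countably many inner regular sets admit simultaneous
  approximations whose total error is below any \<open>e > 0\<close>.\<close>
lemma inner_approx_countable:
  fixes X :: "nat \<Rightarrow> 'a set"
  assumes "\<And>i. X i \<in> sets M" "\<And>i. inner_regular (X i)" "e > 0"
  obtains F where "\<And>i. F i \<in> int_family (space M) E" "\<And>i. F i \<subseteq> X i"
    "c (\<Union>i. X i - F i) < e"
proof -
  define d where "d i = e / 4 * (1/2)^i" for i :: nat
  have geom: "summable (\<lambda>i::nat. (1/2::real)^i)" by (rule summable_geometric) simp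
  have "summable d" unfolding d_def by (rule summable_mult[OF geom])
  have "suminf d = e / 4 * (\<Sum>i. (1/2::real)^i)" unfolding d_def by (rule suminf_mult[OF geom])
  also have "\<dots> = e / 2" using suminf_geometric[of "1/2::real"] by simp
  finally have dsum: "suminf d = e / 2" .
  have "d i > 0" for i unfolding d_def using assms(3) by simp
  then have "\<forall>i. \<exists>F\<in>int_family (space M) E. F \<subseteq> X i \<and> c (X i - F) < d i"
    using assms(2) unfolding inner_regular_def by blast
  then obtain F where F: "\<And>i. F i \<in> int_family (space M) E" "\<And>i. F i \<subseteq> X i"
    "\<And>i. c (X i - F i) < d i" by metis
  have "c (\<Union>i. X i - F i) \<le> suminf d"
    using assms(1) F(1,3) int_family_in_sets \<open>summable d\<close>
    by (intro subadd_bound) (auto intro: less_imp_le)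
  then have "c (\<Union>i. X i - F i) < e" using dsum assms(3) by simp
  then show ?thesis by (rule that[OF F(1,2)])
qed

text \<open>Countable unions: approximate each \<open>A i\<close> by \<open>F i\<close> and truncate to \<open>\<Union>i\<le>N. F i\<close>.\<close>
lemma inner_regular_Union:
  fixes A :: "nat \<Rightarrow> 'a set"
  assumes A: "\<And>i. A i \<in> sets M" "\<And>i. inner_regular (A i)"
  shows "inner_regular (\<Union>i. A i)"
proof (rule inner_regularI)
  fix e :: real assume e: "e > 0"
  then obtain F where F: "\<And>i. F i \<in> int_family (space M) E" "\<And>i. F i \<subseteq> A i"
    "c (\<Union>i. A i - F i) < e / 2"
    using inner_approx_countable[of A "e / 2", OF A] by auto
  define D where "D N = (\<Union>i. A i) - (\<Union>i\<le>N. A i)" for N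
  have DM: "range D \<subseteq> sets M" unfolding D_def using A(1) by auto
  moreover have "decseq D" unfolding D_def decseq_def by auto
  moreover have "(\<Inter>N. D N) = {}" unfolding D_def by auto
  moreover have "e / 2 > 0" using e by simp
  ultimately obtain N where N: "c (D N) < e / 2" by (rule eventually_small)
  let ?G = "\<Union>i\<le>N. F i"
  have FM: "F i \<in> sets M" for i using F(1) by (rule int_family_in_sets)
  have UM: "(\<Union>i. A i - F i) \<in> sets M" using A(1) FM by auto
  have "(\<Union>i. A i) - ?G \<in> sets M" using A(1) FM by auto
  moreover have "(\<Union>i. A i) - ?G \<subseteq> D N \<union> (\<Union>i. A i - F i)"
  proof
    fix x assume x: "x \<in> (\<Union>i. A i) - ?G"
    show "x \<in> D N \<union> (\<Union>i. A i - F i)"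
    proof (cases "x \<in> (\<Union>i\<le>N. A i)")
      case True
      then obtain i where "i \<le> N" "x \<in> A i" by blast
      with x show ?thesis by blast
    next
      case False
      with x show ?thesis unfolding D_def by blast
    qed
  qed
  ultimately have "c ((\<Union>i. A i) - ?G) \<le> c (D N \<union> (\<Union>i. A i - F i))"
    using DM UM by (intro mono) auto
  also have "\<dots> \<le> c (D N) + c (\<Union>i. A i - F i)"
    using DM UM by (intro subadd) auto
  finally have "c ((\<Union>i. A i) - ?G) < e" using N F(3) by linarith
  moreover have "?G \<in> int_family (space M) E" using F(1) by (intro int_family_UN_atMost[OF E_Int])
  moreover have "?G \<subseteq> (\<Union>i. A i)" using F(2) by blast
  ultimately show "\<exists>G\<in>int_family (space M) E. G \<subseteq> (\<Union>i. A i) \<and> c ((\<Union>i. A i) - G) < e"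
    by blast
qed

text \<open>Complements of countable unions: intersect the approximations of the complements.\<close>
lemma inner_regular_compl_Union:
  fixes A :: "nat \<Rightarrow> 'a set"
  assumes A: "\<And>i. A i \<in> sets M" "\<And>i. inner_regular (space M - A i)"
  shows "inner_regular (space M - (\<Union>i. A i))"
proof (rule inner_regularI)
  fix e :: real assume e: "e > 0"
  obtain K where K: "\<And>i. K i \<in> int_family (space M) E" "\<And>i. K i \<subseteq> space M - A i"
    "c (\<Union>i. (space M - A i) - K i) < e"
  proof (rule inner_approx_countable[of "\<lambda>i. space M - A i" e, OF _ A(2) e])
    show "space M - A i \<in> sets M" for i using A(1) by blast
  qed blast
  let ?G = "\<Inter>i. K i"
  have KM: "K i \<in> sets M" for i using K(1) by (rule int_family_in_sets)
  then have "?G \<in> sets M" by (intro sets.countable_INT) auto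
  then have "(space M - (\<Union>i. A i)) - ?G \<in> sets M" using A(1) by (intro sets.Diff) auto
  moreover have "(\<Union>i. (space M - A i) - K i) \<in> sets M" using A(1) KM by (intro sets.countable_UN) auto
  moreover have "(space M - (\<Union>i. A i)) - ?G \<subseteq> (\<Union>i. (space M - A i) - K i)" by blast
  ultimately have "c ((space M - (\<Union>i. A i)) - ?G) \<le> c (\<Union>i. (space M - A i) - K i)"
    by (rule mono)
  then have "c ((space M - (\<Union>i. A i)) - ?G) < e" using K(3) by linarith
  moreover have "?G \<in> int_family (space M) E" using K(1) by (rule int_family_INT)
  moreover have "?G \<subseteq> space M - (\<Union>i. A i)" using K(2) by blast
  ultimately show "\<exists>G\<in>int_family (space M) E. G \<subseteq> space M - (\<Union>i. A i)
      \<and> c ((space M - (\<Union>i. A i)) - G) < e"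
    by blast
qed

text \<open>Good-sets principle: every set of \<open>\<sigma>(E)\<close> and its complement are inner regular.\<close>
lemma sigma_sets_inner_regular:
  assumes "A \<in> sigma_sets (space M) E"
  shows "inner_regular A \<and> inner_regular (space M - A)"
  using assms
proof (induction rule: sigma_sets.induct)
  case (Basic a)
  have "inner_regular a"
    using Basic E_sigma by (intro inner_regular_sigma_family) blast
  moreover have "inner_regular (space M - a)"
    using Basic by (intro inner_regular_int_family int_family_compl)
  ultimately show ?case ..
next
  case Empty
  have "inner_regular {}"
    using int_family_empty[OF E_empty E_sigma] by (rule inner_regular_int_family)
  moreover have "inner_regular (space M)"
    using int_family_space[OF E_empty] by (rule inner_regular_int_family)
  ultimately show ?case by simp
next
  case (Compl a)
  have "a \<subseteq> space M" using sigma_sets_E_sets Compl(1) sets.sets_into_space by blast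
  then have "space M - (space M - a) = a" by blast
  then show ?case using Compl(2) by simp
next
  case (Union A)
  have "A i \<in> sets M" for i using Union(1) sigma_sets_E_sets by blast
  with Union(2) show ?case
    by (simp add: inner_regular_Union inner_regular_compl_Union)
qed

end

section \<open>Hitting functions of random sets\<close>

text \<open>For a cr-set, the event of hitting a measurable set is measurable, being the
  preimage of the generator \<open>{N_B \<noteq> 0}\<close> of \<open>C(\<S>)\<close>.\<close>
lemma cr_set_hitting_event:
  assumes "cr_set P M g" "B \<in> sets M"
  shows "{\<omega>\<in>space P. g \<omega> \<inter> B \<noteq> {}} \<in> sets P"
proof -
  let ?Y = "{X \<in> countable_subsets (space M). count_in B X \<in> - {0}}"
  have gen: "{{X \<in> countable_subsets (space M). count_in A X \<in> C} | A C. A \<in> sets M}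
      \<subseteq> Pow (countable_subsets (space M))" by blast
  have "?Y \<in> sets (C_sigma M)"
    unfolding C_sigma_def sets_measure_of[OF gen]
    by (rule sigma_sets.Basic) (use assms(2) in blast)
  then have "g -` ?Y \<inter> space P \<in> sets P"
    using assms(1) unfolding cr_set_def by (rule measurable_sets[rotated])
  moreover have "g \<omega> \<in> countable_subsets (space M)" if "\<omega> \<in> space P" for \<omega>
    using measurable_space[OF assms(1)[unfolded cr_set_def] that]
    unfolding C_sigma_def by (simp add: space_measure_of_conv)
  then have "g -` ?Y \<inter> space P = {\<omega>\<in>space P. g \<omega> \<inter> B \<noteq> {}}"
    by (auto simp: count_in_def zero_enat_def card_eq_0_iff Int_commute)
  ultimately show ?thesis by simp
qed

lemma finite_eventually_disjoint:
  assumes "finite X" "decseq D" "(\<Inter>n. D n) = {}"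
  shows "\<exists>N. X \<inter> D N = {}"
  using assms(1)
proof (induction X rule: finite_induct)
  case (insert x X)
  then obtain N1 where N1: "X \<inter> D N1 = {}" by blast
  obtain n where n: "x \<notin> D n" using assms(3) by auto
  have "D (max N1 n) \<subseteq> D N1" "D (max N1 n) \<subseteq> D n"
    using assms(2) unfolding decseq_def by auto
  then show ?case using N1 n by blast
qed simp

lemma hitting_cont_capacity:
  assumes P: "prob_space P"
    and fin: "\<And>\<omega>. \<omega> \<in> space P \<Longrightarrow> finite (f \<omega>)"
    and ev: "\<And>B. B \<in> sets M \<Longrightarrow> {\<omega>\<in>space P. f \<omega> \<inter> B \<noteq> {}} \<in> sets P"
  shows "cont_capacity M (hitting P f)"
proof -
  interpret prob_space P by (rule P)
  have ev_Un: "{\<omega>\<in>space P. f \<omega> \<inter> (\<Union>i. X i) \<noteq> {}} = (\<Union>i. {\<omega>\<in>space P. f \<omega> \<inter> X i \<noteq> {}})"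
    for X :: "nat \<Rightarrow> _" by blast
  show ?thesis
  proof
    show "hitting P f X \<ge> 0" for X by (simp add: hitting_def)
  next
    fix X Y assume "X \<in> sets M" "Y \<in> sets M" "X \<subseteq> Y"
    then show "hitting P f X \<le> hitting P f Y"
      unfolding hitting_def by (intro finite_measure_mono ev) auto
  next
    fix X Y assume "X \<in> sets M" "Y \<in> sets M"
    moreover have "{\<omega>\<in>space P. f \<omega> \<inter> (X \<union> Y) \<noteq> {}}
        = {\<omega>\<in>space P. f \<omega> \<inter> X \<noteq> {}} \<union> {\<omega>\<in>space P. f \<omega> \<inter> Y \<noteq> {}}" by blast
    ultimately show "hitting P f (X \<union> Y) \<le> hitting P f X + hitting P f Y"
      unfolding hitting_def by (simp add: measure_Un_le ev)
  next
    fix X :: "nat \<Rightarrow> _" assume "range X \<subseteq> sets M" "summable (\<lambda>i. hitting P f (X i))"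
    then show "hitting P f (\<Union>i. X i) \<le> (\<Sum>i. hitting P f (X i))"
      unfolding hitting_def ev_Un by (intro finite_measure_subadditive_countably) (auto intro: ev)
  next
    fix D :: "nat \<Rightarrow> _" assume D: "range D \<subseteq> sets M" "decseq D" "(\<Inter>i. D i) = {}"
    let ?H = "\<lambda>i. {\<omega>\<in>space P. f \<omega> \<inter> D i \<noteq> {}}"
    have "(\<Inter>i. ?H i) = {}"
      using finite_eventually_disjoint[OF fin D(2,3)] by blast
    moreover have "decseq ?H" using D(2) unfolding decseq_def by blast
    then have "(\<lambda>i. measure P (?H i)) \<longlonglongrightarrow> measure P (\<Inter>i. ?H i)"
      using D(1) ev by (intro finite_Lim_measure_decseq) auto
    ultimately show "(\<lambda>i. hitting P f (D i)) \<longlonglongrightarrow> 0"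
      unfolding hitting_def by simp
  qed
qed

lemma hitting_mono:
  assumes "prob_space P" "\<And>\<omega>. \<omega> \<in> space P \<Longrightarrow> f \<omega> \<subseteq> g \<omega>" "X \<subseteq> Y"
    "{\<omega>\<in>space P. g \<omega> \<inter> Y \<noteq> {}} \<in> sets P"
  shows "hitting P f X \<le> hitting P g Y"
proof -
  interpret prob_space P by (rule assms(1))
  show ?thesis unfolding hitting_def using assms(2-4) by (intro finite_measure_mono) auto
qed

lemma hitting_incseq_limit:
  assumes "prob_space P" "\<And>\<omega>. \<omega> \<in> space P \<Longrightarrow> \<pi> \<omega> = (\<Union>N. f N \<omega>)"
    "\<And>\<omega>. incseq (\<lambda>N. f N \<omega>)" "\<And>N. {\<omega>\<in>space P. f N \<omega> \<inter> A \<noteq> {}} \<in> sets P"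
  shows "(\<lambda>N. hitting P (f N) A) \<longlonglongrightarrow> hitting P \<pi> A"
proof -
  interpret prob_space P by (rule assms(1))
  let ?H = "\<lambda>N. {\<omega>\<in>space P. f N \<omega> \<inter> A \<noteq> {}}"
  have "range ?H \<subseteq> sets P" using assms(4) by blast
  moreover have "incseq ?H" using assms(3) unfolding incseq_def by blast
  ultimately have "(\<lambda>N. measure P (?H N)) \<longlonglongrightarrow> measure P (\<Union>N. ?H N)"
    by (rule finite_Lim_measure_incseq)
  moreover have "(\<Union>N. ?H N) = {\<omega>\<in>space P. \<pi> \<omega> \<inter> A \<noteq> {}}"
    using assms(2) by blast
  ultimately show ?thesis unfolding hitting_def by simp
qed

lemma Sup_eq_approx:
  fixes x :: real
  assumes "\<And>s. s \<in> S \<Longrightarrow> s \<le> x" "\<And>e. e > 0 \<Longrightarrow> \<exists>s\<in>S. x - e < s"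
  shows "x = Sup S"
proof -
  have nonempty: "S \<noteq> {}" using assms(2)[of 1] by auto
  have least: "x \<le> y" if "\<And>s. s \<in> S \<Longrightarrow> s \<le> y" for y
  proof (rule ccontr)
    assume "\<not> x \<le> y"
    then obtain s where "s \<in> S" "x - (x - y) < s" using assms(2)[of "x - y"] by auto
    with that show False by fastforce
  qed
  show ?thesis by (rule cSup_eq_non_empty[symmetric, OF nonempty assms(1) least])
qed

section \<open>Constructive cr-sets\<close>

lemma constructive_finite_approximants:
  assumes "constructive P M \<pi>"
  obtains f :: "nat \<Rightarrow> 'w \<Rightarrow> 'a set" where
    "\<And>N \<omega>. \<omega> \<in> space P \<Longrightarrow> finite (f N \<omega>)"
    "\<And>N B. B \<in> sets M \<Longrightarrow> {\<omega>\<in>space P. f N \<omega> \<inter> B \<noteq> {}} \<in> sets P"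
    "\<And>\<omega>. incseq (\<lambda>N. f N \<omega>)" "\<And>\<omega>. \<omega> \<in> space P \<Longrightarrow> \<pi> \<omega> = (\<Union>N. f N \<omega>)"
proof -
  obtain \<pi>s :: "nat \<Rightarrow> 'w \<Rightarrow> 'a set" where \<pi>s: "\<And>k. finite_cr_set P M (\<pi>s k)"
    "\<And>\<omega>. \<omega> \<in> space P \<Longrightarrow> \<pi> \<omega> = (\<Union>k. \<pi>s k \<omega>)"
    using assms unfolding constructive_def by metis
  define f where "f N \<omega> = (\<Union>k\<le>N. \<pi>s k \<omega>)" for N \<omega>
  have fin: "finite (f N \<omega>)" if "\<omega> \<in> space P" for N \<omega>
    using \<pi>s(1) that unfolding f_def finite_cr_set_def by simp
  have "{\<omega>\<in>space P. f N \<omega> \<inter> B \<noteq> {}} = (\<Union>k\<le>N. {\<omega>\<in>space P. \<pi>s k \<omega> \<inter> B \<noteq> {}})" for N B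
    unfolding f_def by blast
  moreover have "{\<omega>\<in>space P. \<pi>s k \<omega> \<inter> B \<noteq> {}} \<in> sets P" if "B \<in> sets M" for k B
    using cr_set_hitting_event[OF _ that] \<pi>s(1) unfolding finite_cr_set_def by blast
  ultimately have ev: "{\<omega>\<in>space P. f N \<omega> \<inter> B \<noteq> {}} \<in> sets P" if "B \<in> sets M" for N B
    using that by simp
  have inc: "incseq (\<lambda>N. f N \<omega>)" for \<omega>
    unfolding incseq_def f_def by (intro allI impI UN_mono) auto
  have un: "\<pi> \<omega> = (\<Union>N. f N \<omega>)" if "\<omega> \<in> space P" for \<omega>
    unfolding f_def \<pi>s(2)[OF that] by (auto intro: atMost_iff[THEN iffD2, OF order_refl])
  show ?thesis by (rule that[OF fin ev inc un])
qed

text \<open>First pass to a finite approximant \<open>f_N\<close> with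
  \<open>T_{f_N}(A) > T_\<pi>(A) - e/2\<close>, then use inner regularity of \<open>T_{f_N}\<close>:
  \<open>T_{f_N}(A) \<le> T_{f_N}(A - F) + T_{f_N}(F) < e/2 + T_\<pi>(F)\<close>.\<close>
lemma constructive_hitting_inner_approx:
  assumes P: "prob_space P"
    and E: "E \<subseteq> sets M" "\<And>A B. A \<in> E \<Longrightarrow> B \<in> E \<Longrightarrow> A \<inter> B \<in> E" "{} \<in> E"
      "E \<subseteq> sigma_family (int_family (space M) E)"
    and \<pi>: "cr_set P M \<pi>" "constructive P M \<pi>"
    and A: "A \<in> sigma_sets (space M) E" and e: "e > 0"
  shows "\<exists>F\<in>int_family (space M) E. F \<subseteq> A \<and> hitting P \<pi> A - e < hitting P \<pi> F"
proof -
  obtain f where fin: "\<And>N \<omega>. \<omega> \<in> space P \<Longrightarrow> finite (f N \<omega>)"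
    and ev: "\<And>N B. B \<in> sets M \<Longrightarrow> {\<omega>\<in>space P. f N \<omega> \<inter> B \<noteq> {}} \<in> sets P"
    and inc: "\<And>\<omega>. incseq (\<lambda>N. f N \<omega>)" and un: "\<And>\<omega>. \<omega> \<in> space P \<Longrightarrow> \<pi> \<omega> = (\<Union>N. f N \<omega>)"
    using constructive_finite_approximants[OF \<pi>(2)] by blast
  have AM: "A \<in> sets M" using A E(1) sets.sigma_sets_subset by blast
  have "(\<lambda>N. hitting P (f N) A) \<longlonglongrightarrow> hitting P \<pi> A"
    using hitting_incseq_limit[OF P un inc ev[OF AM]] .
  from order_tendstoD(1)[OF this, of "hitting P \<pi> A - e / 2"] e
  obtain N where N: "hitting P \<pi> A - e / 2 < hitting P (f N) A"
    by (auto simp: eventually_sequentially)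
  interpret capacity_generator M "hitting P (f N)" E
    using hitting_cont_capacity[OF P fin ev] E
    by (intro capacity_generator.intro capacity_generator_axioms.intro) auto
  obtain F where F: "F \<in> int_family (space M) E" "F \<subseteq> A" "hitting P (f N) (A - F) < e / 2"
    using sigma_sets_inner_regular[OF A] e unfolding inner_regular_def by (meson half_gt_zero)
  have FM: "F \<in> sets M" using F(1) by (rule int_family_in_sets)
  have "hitting P (f N) A \<le> hitting P (f N) (A - F) + hitting P (f N) F"
    using subadd[of "A - F" F] AM FM F(2) by (simp add: Un_absorb2)
  also have "hitting P (f N) F \<le> hitting P \<pi> F"
    using un FM \<pi>(1) by (intro hitting_mono[OF P] cr_set_hitting_event) auto
  finally have "hitting P \<pi> A - e < hitting P \<pi> F" using N F(3) by linarith
  then show ?thesis using F(1,2) by blast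
qed

theorem theorem5p7:
  fixes P :: "'w measure" and M :: "'a measure" and E :: "'a set set"
    and \<pi> :: "'w \<Rightarrow> 'a set"
  assumes "prob_space P"
    and "E \<subseteq> Pow (space M)"
    and "\<And>A B. A \<in> E \<Longrightarrow> B \<in> E \<Longrightarrow> A \<inter> B \<in> E"
    and "sigma_sets (space M) E = sets M"
    and "{} \<in> E"
    and "E \<subseteq> sigma_family (int_family (space M) E)"
    and "cr_set P M \<pi>"
    and "constructive P M \<pi>"
  shows "\<forall>A \<in> sets M. hitting P \<pi> A =
           Sup (hitting P \<pi> ` {F \<in> int_family (space M) E. F \<subseteq> A})"
proof
  fix A assume A: "A \<in> sets M"
  have E: "E \<subseteq> sets M" using assms(4) by blast
  show "hitting P \<pi> A = Sup (hitting P \<pi> ` {F \<in> int_family (space M) E. F \<subseteq> A})"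
  proof (rule Sup_eq_approx)
    fix s assume "s \<in> hitting P \<pi> ` {F \<in> int_family (space M) E. F \<subseteq> A}"
    then obtain F where "F \<subseteq> A" "s = hitting P \<pi> F" by blast
    then show "s \<le> hitting P \<pi> A"
      using hitting_mono[OF assms(1) _ _ cr_set_hitting_event[OF assms(7) A]] by blast
  next
    fix e :: real assume "e > 0"
    then obtain F where "F \<in> int_family (space M) E" "F \<subseteq> A" "hitting P \<pi> A - e < hitting P \<pi> F"
      using constructive_hitting_inner_approx[OF assms(1) E assms(3,5,6,7,8)] A assms(4) by blast
    then show "\<exists>s\<in>hitting P \<pi> ` {F \<in> int_family (space M) E. F \<subseteq> A}. hitting P \<pi> A - e < s"
      by blast
  qed
qed

end
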